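(* Let $G_m$ be a parametric regulatory network and $T\subseteq\Delta(G_m)$ a set of transitions. Then $p^\#(T)=p(T)$, i.e. the set of parametrisations $\{P\mid L\le P\le U\}$ with $(L,U)=p^\#(T)$ is exactly $p(T)$.
   Context: An influence graph is $G=(V,I)$ with $V=\{1,\dots,n\}$, $I\subseteq V\times V$; the regulators of $v$ are $n^-(v)=\{u\mid(u,v)\in I\}$. A vector $m\in\mathbb N^n$ gives maximal values, $D_v=\{0,\dots,m_v\}$, and $G_m=(G,m)$ is a PRN. Regulator states of $v$: $\Omega_v=\prod_{u\in n^-(v)}D_u$. Parameters: $\Omega=\bigcup_v\{v\}\times\Omega_v$. Parametrisations: vectors $P\in\mathbb P(G_m)=\prod_{\langle v,\omega\rangle\in\Omega}D_v$ with coordinates $P_{v,\omega}$, ordered componentwise; $\bot$ is the zero vector and $\top_{v,\omega}=m_v$. A pair $(L,U)$ denotes $\{P\mid L\le P\le U\}$ (empty if $L\not\le U$). States $S(G_m)=\prod_vD_v$; $\omega_v(x)$ is the projection of state $x$ onto the regulators of $v$. Transitions $\Delta(G_m)$: $x\xrightarrow{v,+}y$ where $y$ equals $x$ except $y_v=x_v+1\le m_v$, and $x\xrightarrow{v,-}y$ where $y_v=x_v-1\ge0$. $\mathcal P_{x\xrightarrow{v,+}y}=\{P\mid P_{v,\omega_v(x)}\ge x_v+1\}$, $\mathcal P_{x\xrightarrow{v,-}y}=\{P\mid P_{v,\omega_v(x)}\le x_v-1\}$; $p(\emptyset)=\mathbb P(G_m)$, $p(T)=\bigcap_{t\in T}\mathcal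 P_t$. Narrowing: $\nabla_{x\xrightarrow{v,+}y}(L,U)=(\max(L,\bot[(v,\omega_v(x))\leftarrow x_v+1]),U)$ and $\nabla_{x\xrightarrow{v,-}y}(L,U)=(L,\min(U,\top[(v,\omega_v(x))\leftarrow x_v-1]))$ (componentwise max/min; $Q[(v,\omega)\leftarrow k]$ replaces that coordinate by $k$). The abstraction is $p^\#(\emptyset)=(\bot,\top)$ and $p^\#(T\cup\{t\})=\nabla_t(p^\#(T))$. *)

theory Defs
  imports Main
begin

type_synonym state = "nat \<Rightarrow> nat"
type_synonym param = "nat \<Rightarrow> state \<Rightarrow> nat"
(* transition (x, v, b, y): b = True means x -(v,+)-> y, b = False means x -(v,-)-> y *)
type_synonym trans = "state \<times> nat \<times> bool \<times> state"

definition verts :: "nat \<Rightarrow> nat set" where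
  "verts n = {1..n}"

definition regs :: "(nat \<times> nat) set \<Rightarrow> nat \<Rightarrow> nat set" where
  "regs I v = {u. (u, v) \<in> I}"

definition states :: "nat \<Rightarrow> (nat \<Rightarrow> nat) \<Rightarrow> state set" where
  "states n m = {x. (\<forall>v\<in>verts n. x v \<le> m v) \<and> (\<forall>v. v \<notin> verts n \<longrightarrow> x v = 0)}"

definition proj :: "(nat \<times> nat) set \<Rightarrow> nat \<Rightarrow> state \<Rightarrow> state" where
  "proj I v x = (\<lambda>u. if u \<in> regs I v then x u else 0)"

definition regstates :: "(nat \<times> nat) set \<Rightarrow> (nat \<Rightarrow> nat) \<Rightarrow> nat \<Rightarrow> state set" where
  "regstates I m v = {w. (\<forall>u\<in>regs I v. w u \<le> m u) \<and> (\<forall>u. u \<notin> regs I v \<longrightarrow> w u = 0)}"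

definition params :: "nat \<Rightarrow> (nat \<times> nat) set \<Rightarrow> (nat \<Rightarrow> nat) \<Rightarrow> (nat \<times> state) set" where
  "params n I m = {(v, w). v \<in> verts n \<and> w \<in> regstates I m v}"

definition parametrisations :: "nat \<Rightarrow> (nat \<times> nat) set \<Rightarrow> (nat \<Rightarrow> nat) \<Rightarrow> param set" where
  "parametrisations n I m =
     {P. (\<forall>(v, w)\<in>params n I m. P v w \<le> m v) \<and> (\<forall>v w. (v, w) \<notin> params n I m \<longrightarrow> P v w = 0)}"

definition botP :: param where
  "botP = (\<lambda>_ _. 0)"

definition topP :: "nat \<Rightarrow> (nat \<times> nat) set \<Rightarrow> (nat \<Rightarrow> nat) \<Rightarrow> param" where
  "topP n I m = (\<lambda>v w. if (v, w) \<in> params n I m then m v else 0)"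

definition updP :: "param \<Rightarrow> nat \<Rightarrow> state \<Rightarrow> nat \<Rightarrow> param" where
  "updP Q v w k = Q(v := (Q v)(w := k))"

definition transitions :: "nat \<Rightarrow> (nat \<times> nat) set \<Rightarrow> (nat \<Rightarrow> nat) \<Rightarrow> trans set" where
  "transitions n I m =
     {(x, v, True, y) | x v y. x \<in> states n m \<and> v \<in> verts n \<and> x v + 1 \<le> m v \<and> y = x(v := x v + 1)}
   \<union> {(x, v, False, y) | x v y. x \<in> states n m \<and> v \<in> verts n \<and> 1 \<le> x v \<and> y = x(v := x v - 1)}"

fun tparams :: "nat \<Rightarrow> (nat \<times> nat) set \<Rightarrow> (nat \<Rightarrow> nat) \<Rightarrow> trans \<Rightarrow> param set" where
  "tparams n I m (x, v, b, y) =
     {P \<in> parametrisations n I m.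
        if b then x v + 1 \<le> P v (proj I v x) else P v (proj I v x) \<le> x v - 1}"

definition pset :: "nat \<Rightarrow> (nat \<times> nat) set \<Rightarrow> (nat \<Rightarrow> nat) \<Rightarrow> trans set \<Rightarrow> param set" where
  "pset n I m T = parametrisations n I m \<inter> (\<Inter>t\<in>T. tparams n I m t)"

fun narrow :: "nat \<Rightarrow> (nat \<times> nat) set \<Rightarrow> (nat \<Rightarrow> nat) \<Rightarrow> trans \<Rightarrow> param \<times> param \<Rightarrow> param \<times> param" where
  "narrow n I m (x, v, b, y) (L, U) =
     (if b then (sup L (updP botP v (proj I v x) (x v + 1)), U)
      else (L, inf U (updP (topP n I m) v (proj I v x) (x v - 1))))"

(* p#: pabs n I m T LU means LU is a value of p#(T) obtained by the recursive definition *)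
inductive pabs :: "nat \<Rightarrow> (nat \<times> nat) set \<Rightarrow> (nat \<Rightarrow> nat) \<Rightarrow> trans set \<Rightarrow> param \<times> param \<Rightarrow> bool"
  for n I m where
  empty: "pabs n I m {} (botP, topP n I m)"
| insert: "pabs n I m T LU \<Longrightarrow> pabs n I m (insert t T) (narrow n I m t LU)"

fun box :: "nat \<Rightarrow> (nat \<times> nat) set \<Rightarrow> (nat \<Rightarrow> nat) \<Rightarrow> param \<times> param \<Rightarrow> param set" where
  "box n I m (L, U) = {P \<in> parametrisations n I m. L \<le> P \<and> P \<le> U}"

end

theory Submission
  imports Defs "HOL-Library.FuncSet"
begin

text \<open>Each set \<open>\<P>\<^sub>t\<close> is itself a box: a lower bound on one coordinate for an activation,
  an upper bound for an inhibition. Intersecting a box with a box takes the componentwise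
  maximum of the lower and the minimum of the upper bounds, which is exactly what the
  narrowing operator does, so by induction along the construction of \<open>p\<^sup>#(T)\<close> its box is
  \<open>p(T)\<close>. That \<open>p\<^sup>#(T)\<close> is defined at all only needs \<open>T\<close> to be finite, which holds since
  there are finitely many states.\<close>

lemma finite_states: "finite (states n m)"
proof -
  let ?extend = "\<lambda>f v. if v \<in> verts n then f v else (0::nat)"
  have "states n m \<subseteq> ?extend ` (Pi\<^sub>E (verts n) (\<lambda>v. {..m v}))"
  proof
    fix x assume "x \<in> states n m"
    then have "x = ?extend (restrict x (verts n))"
      and "restrict x (verts n) \<in> Pi\<^sub>E (verts n) (\<lambda>v. {..m v})"
      by (auto simp: states_def)
    then show "x \<in> ?extend ` (Pi\<^sub>E (verts n) (\<lambda>v. {..m v}))" by blast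
  qed
  moreover have "finite (Pi\<^sub>E (verts n) (\<lambda>v. {..m v}))"
    by (rule finite_PiE) (auto simp: verts_def)
  ultimately show ?thesis using finite_surj by blast
qed

lemma transitions_subset: "transitions n I m \<subseteq> states n m \<times> verts n \<times> UNIV \<times> states n m"
  by (auto simp: transitions_def states_def) (meson diff_le_self le_trans)

lemma finite_transitions: "finite (transitions n I m)"
  using finite_states
  by (intro finite_subset[OF transitions_subset] finite_cartesian_product) (auto simp: verts_def)

lemma pabs_exists_if_finite: "finite T \<Longrightarrow> \<exists>LU. pabs n I m T LU"
  by (induction rule: finite_induct) (meson pabs.intros)+

lemma botP_le: "botP \<le> P"
  by (simp add: botP_def le_fun_def)

lemma parametrisation_le_topP: "P \<in> parametrisations n I m \<Longrightarrow> P \<le> topP n I m"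
  by (auto simp: le_fun_def topP_def parametrisations_def)

lemma updP_botP_le_iff: "updP botP v w k \<le> P \<longleftrightarrow> k \<le> P v w"
  by (auto simp: le_fun_def updP_def botP_def)

lemma le_updP_topP_iff:
  assumes "P \<in> parametrisations n I m"
  shows "P \<le> updP (topP n I m) v w k \<longleftrightarrow> P v w \<le> k"
  using parametrisation_le_topP[OF assms] by (auto simp: le_fun_def updP_def)

lemma box_narrow: "box n I m (narrow n I m t LU) = box n I m LU \<inter> tparams n I m t"
proof -
  obtain x v b y L U where "t = (x, v, b, y)" and "LU = (L, U)"
    by (cases t, cases LU) auto
  then show ?thesis
    by (cases b) (auto simp: updP_botP_le_iff le_updP_topP_iff)
qed

lemma box_pabs_eq_pset: "pabs n I m T LU \<Longrightarrow> box n I m LU = pset n I m T"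
proof (induction rule: pabs.induct)
  case empty
  then show ?case by (auto simp: pset_def botP_le parametrisation_le_topP)
next
  case (insert T LU t)
  then show ?case by (auto simp: box_narrow pset_def)
qed

theorem theorem1:
  fixes n :: nat and I :: "(nat \<times> nat) set" and m :: "nat \<Rightarrow> nat" and T :: "trans set"
  assumes "I \<subseteq> verts n \<times> verts n"
    and "T \<subseteq> transitions n I m"
  shows "(\<exists>LU. pabs n I m T LU) \<and> (\<forall>LU. pabs n I m T LU \<longrightarrow> box n I m LU = pset n I m T)"
proof
  have "finite T" using assms(2) finite_transitions by (rule finite_subset)
  then show "\<exists>LU. pabs n I m T LU" by (rule pabs_exists_if_finite)
  show "\<forall>LU. pabs n I m T LU \<longrightarrow> box n I m LU = pset n I m T"
    using box_pabs_eq_pset by blast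
qed

end
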